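(* Let $\mathcal H$ be a finite multi-sorted relational structure and $p$ a prime. Then, up to isomorphism, there exists a unique $p$-rigid multi-sorted structure $\mathcal H^{*p}$ such that $\mathcal H\rightarrow_p^*\mathcal H^{*p}$.
   Context: A multi-sorted relational structure $\mathcal H$ over sorts $[k]$ consists of pairwise disjoint finite sets $H_1,\dots,H_k$ and finitely many relations, each relation symbol $\mathcal R$ having an arity $\ell$ and a type $(i_1,\dots,i_\ell)\in[k]^\ell$, interpreted as a subset of $H_{i_1}\times\dots\times H_{i_\ell}$. Similar structures have the same signature and types. A homomorphism $\varphi=\{\varphi_i\}_{i\in[k]}$, $\varphi_i:G_i\to H_i$, maps every tuple of each relation of $\mathcal G$ to a tuple of the corresponding relation of $\mathcal H$ (applying $\varphi_{i_j}$ in coordinate $j$); isomorphisms and automorphisms are defined as usual (bijective with homomorphic inverse). An automorphism $\pi=\{\pi_i\}$ has order $p$ if each $\pi_i$ is the identity or has order $p$, and at least one $\pi_i$ is not the identity. $\mathcal H$ is $p$-rigid if it has no automorphism of order $p$. For an automorphism $\pi$, $\mathcal H^\pi$ is the substructure of $\mathcal H$ induced by the sets $\mathrm{Fix}(\pi_i)=\{a\in H_i:\pi_i(a)=a\}$ (each relation intersected with the product of the fixed-point sets of the corresponding sorts). Write $\mathcal H\rightarrow_p\mathcal H'$ if there is an automorphism $\pi$ of $\mathcal H$ of order $p$ with $\mathcal H'\cong\mathcal H^\pi$, and $\mathcal H\rightarrow_p^*\mathcal H'$ if there are structures $\mathcal H_1\cong\mathcal H,\ \mathcal H_t\cong\mathcal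 H'$ with $\mathcal H_1\rightarrow_p\mathcal H_2\rightarrow_p\dots\rightarrow_p\mathcal H_t$. *)

theory Defs
  imports "HOL-Computational_Algebra.Primes"
begin

text \<open>The signature is fixed by a number of sorts
  k (sorts are 0,...,k-1) and a list sig of relation types; relation j has type sig!j
  (a list of sorts), and its arity is length (sig!j).  A structure gives a universe
  msort H i for each sort i, and the interpretation mrel H j of each relation symbol j
  as a set of tuples (lists).\<close>

record 'a mstruct =
  msort :: "nat \<Rightarrow> 'a set"
  mrel  :: "nat \<Rightarrow> 'a list set"

definition sig_ok :: "nat \<Rightarrow> nat list list \<Rightarrow> bool" where
  "sig_ok k sig \<longleftrightarrow> (\<forall>ty\<in>set sig. \<forall>i\<in>set ty. i < k)"

definition tuples_of :: "('a mstruct) \<Rightarrow> nat list \<Rightarrow> 'a list set" where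
  "tuples_of H ty = {xs. length xs = length ty \<and> (\<forall>t<length xs. xs ! t \<in> msort H (ty ! t))}"

definition mwf :: "nat \<Rightarrow> nat list list \<Rightarrow> 'a mstruct \<Rightarrow> bool" where
  "mwf k sig H \<longleftrightarrow>
     (\<forall>i<k. finite (msort H i)) \<and>
     (\<forall>i<k. \<forall>i'<k. i \<noteq> i' \<longrightarrow> msort H i \<inter> msort H i' = {}) \<and>
     (\<forall>j<length sig. mrel H j \<subseteq> tuples_of H (sig ! j))"

definition app_tuple :: "(nat \<Rightarrow> 'a \<Rightarrow> 'b) \<Rightarrow> nat list \<Rightarrow> 'a list \<Rightarrow> 'b list" where
  "app_tuple \<phi> ty xs = map (\<lambda>t. \<phi> (ty ! t) (xs ! t)) [0..<length xs]"

definition mhom :: "nat \<Rightarrow> nat list list \<Rightarrow> 'a mstruct \<Rightarrow> 'b mstruct \<Rightarrow> (nat \<Rightarrow> 'a \<Rightarrow> 'b) \<Rightarrow> bool" where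
  "mhom k sig G H \<phi> \<longleftrightarrow>
     (\<forall>i<k. \<forall>a\<in>msort G i. \<phi> i a \<in> msort H i) \<and>
     (\<forall>j<length sig. \<forall>xs\<in>mrel G j. app_tuple \<phi> (sig ! j) xs \<in> mrel H j)"

definition miso_via :: "nat \<Rightarrow> nat list list \<Rightarrow> 'a mstruct \<Rightarrow> 'b mstruct \<Rightarrow> (nat \<Rightarrow> 'a \<Rightarrow> 'b) \<Rightarrow> bool" where
  "miso_via k sig G H \<phi> \<longleftrightarrow>
     mhom k sig G H \<phi> \<and>
     (\<forall>i<k. bij_betw (\<phi> i) (msort G i) (msort H i)) \<and>
     mhom k sig H G (\<lambda>i. inv_into (msort G i) (\<phi> i))"

definition miso :: "nat \<Rightarrow> nat list list \<Rightarrow> 'a mstruct \<Rightarrow> 'b mstruct \<Rightarrow> bool" where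
  "miso k sig G H \<longleftrightarrow> (\<exists>\<phi>. miso_via k sig G H \<phi>)"

definition mauto :: "nat \<Rightarrow> nat list list \<Rightarrow> 'a mstruct \<Rightarrow> (nat \<Rightarrow> 'a \<Rightarrow> 'a) \<Rightarrow> bool" where
  "mauto k sig H \<pi> \<longleftrightarrow> miso_via k sig H H \<pi>"

definition is_id_on :: "('a \<Rightarrow> 'a) \<Rightarrow> 'a set \<Rightarrow> bool" where
  "is_id_on f A \<longleftrightarrow> (\<forall>a\<in>A. f a = a)"

definition perm_order_on :: "('a \<Rightarrow> 'a) \<Rightarrow> 'a set \<Rightarrow> nat" where
  "perm_order_on f A = (LEAST n. 0 < n \<and> is_id_on (f ^^ n) A)"

definition mauto_order :: "nat \<Rightarrow> nat list list \<Rightarrow> nat \<Rightarrow> 'a mstruct \<Rightarrow> (nat \<Rightarrow> 'a \<Rightarrow> 'a) \<Rightarrow> bool" where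
  "mauto_order k sig p H \<pi> \<longleftrightarrow>
     mauto k sig H \<pi> \<and>
     (\<forall>i<k. is_id_on (\<pi> i) (msort H i) \<or> perm_order_on (\<pi> i) (msort H i) = p) \<and>
     (\<exists>i<k. \<not> is_id_on (\<pi> i) (msort H i))"

definition p_rigid :: "nat \<Rightarrow> nat list list \<Rightarrow> nat \<Rightarrow> 'a mstruct \<Rightarrow> bool" where
  "p_rigid k sig p H \<longleftrightarrow> \<not> (\<exists>\<pi>. mauto_order k sig p H \<pi>)"

definition fix_sub :: "nat \<Rightarrow> nat list list \<Rightarrow> 'a mstruct \<Rightarrow> (nat \<Rightarrow> 'a \<Rightarrow> 'a) \<Rightarrow> 'a mstruct" where
  "fix_sub k sig H \<pi> =
     (let S = (\<lambda>i. if i < k then {a \<in> msort H i. \<pi> i a = a} else msort H i) in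
      \<lparr> msort = S,
        mrel = (\<lambda>j. if j < length sig
                    then {xs \<in> mrel H j. \<forall>t<length xs. xs ! t \<in> S (sig ! j ! t)}
                    else mrel H j) \<rparr>)"

definition pstep :: "nat \<Rightarrow> nat list list \<Rightarrow> nat \<Rightarrow> 'a mstruct \<Rightarrow> 'b mstruct \<Rightarrow> bool" where
  "pstep k sig p H H' \<longleftrightarrow> (\<exists>\<pi>. mauto_order k sig p H \<pi> \<and> miso k sig H' (fix_sub k sig H \<pi>))"

text \<open>The intermediate structures are taken over the element type of H.\<close>
definition preach :: "nat \<Rightarrow> nat list list \<Rightarrow> nat \<Rightarrow> 'a mstruct \<Rightarrow> 'b mstruct \<Rightarrow> bool" where
  "preach k sig p H H' \<longleftrightarrow>
     (\<exists>hs :: 'a mstruct list. hs \<noteq> [] \<and> (\<forall>G\<in>set hs. mwf k sig G) \<and>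
        miso k sig (hd hs) H \<and> miso k sig (last hs) H' \<and>
        (\<forall>i. Suc i < length hs \<longrightarrow> pstep k sig p (hs ! i) (hs ! Suc i)))"

end

theory Submission
  imports
    Defs
    "HOL-Algebra.Sylow"
    "HOL-Algebra.Multiplicative_Group"
    "HOL-Combinatorics.Orbits"
    "HOL-Combinatorics.Cycles"
begin

(*
  Write e(G, H) for the number of injective homomorphisms G \<rightarrow> H. If \<pi> is an automorphism of H
  of order p, composing with \<pi> permutes these embeddings with period p, so the embeddings that \<pi>
  moves fall into orbits of size exactly p, while those it fixes are precisely the embeddings into
  H^\<pi>. Hence e(G, H) \<equiv> e(G, H^\<pi>) mod p, and e(G, -) mod p is constant along \<rightarrow>_p^*.

  If H' is p-rigid, then e(H', H') = |Aut H'| is prime to p: otherwise Cauchy's theorem yields an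
  automorphism of order p. So for p-rigid H1, H2 reachable from H we get
  e(H1, H2) \<equiv> e(H1, H1) \<noteq> 0 mod p and symmetrically; injective homomorphisms in both
  directions between finite structures give an isomorphism. Existence holds because each step
  H \<rightarrow>_p H^\<pi> strictly shrinks some sort.
*)

section \<open>Prime periods\<close>

lemma fixpoint_if_funpow_coprime:
  assumes "prime p" "(f ^^ p) x = x" "(f ^^ n) x = x" "\<not> p dvd n"
  shows "f x = x"
proof -
  have "n \<noteq> 0" using assms(4) by (metis dvd_0_right)
  moreover have "gcd n p = 1"
    using assms(1,4) by (metis coprime_commute coprime_iff_gcd_eq_1 prime_imp_coprime)
  ultimately obtain a b where ab: "n * a = p * b + 1" using bezout_nat[of n p] by auto
  have "x = (f ^^ (n * a)) x" using funpow_mod_eq[OF assms(3), of "n * a"] by simp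
  also have "\<dots> = f ((f ^^ (p * b)) x)" by (simp add: ab)
  also have "\<dots> = f x" using funpow_mod_eq[OF assms(2), of "p * b"] by simp
  finally show ?thesis by simp
qed

lemma card_orbit_prime:
  assumes "prime p" "(f ^^ p) x = x" "f x \<noteq> x"
  shows "card (orbit f x) = p"
proof -
  have "0 < p" using assms(1) prime_gt_0_nat by blast
  then have x: "x \<in> orbit f x"
    using assms(2) unfolding orbit_altdef by (metis (mono_tags, lifting) mem_Collect_eq)
  let ?d = "funpow_dist1 f x x"
  have "card (orbit f x) = ?d"
    by (simp add: orbit_conv_funpow_dist1[OF x] card_image inj_on_funpow_dist1[OF x])
  moreover have "?d \<le> p" by (rule funpow_dist1_le_self[OF assms(2) \<open>0 < p\<close> x])
  moreover have "\<not> ?d < p"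
    using fixpoint_if_funpow_coprime[OF assms(1,2) funpow_dist1_prop[OF x]] assms(3)
    by (metis dvd_imp_le not_le zero_less_Suc)
  ultimately show ?thesis by linarith
qed

lemma card_fixpoints_mod_prime:
  assumes "finite X" "f ` X \<subseteq> X" "\<And>x. x \<in> X \<Longrightarrow> (f ^^ p) x = x" "prime p"
  shows "card {x \<in> X. f x = x} mod p = card X mod p"
proof -
  let ?Y = "{x \<in> X. f x \<noteq> x}"
  have "0 < p" using assms(4) prime_gt_0_nat by blast
  have self_in: "x \<in> orbit f x" if "x \<in> X" for x
    using assms(3)[OF that] \<open>0 < p\<close> unfolding orbit_altdef
    by (metis (mono_tags, lifting) mem_Collect_eq)
  have orbit_eq: "orbit f z = orbit f x" if "x \<in> X" "z \<in> orbit f x" for x z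
    using orbit_cyclic_eq3[of f "orbit f x" z] self_in[OF that(1)] that(2)
    by (auto simp: cyclic_on_def)
  have "orbit f y \<subseteq> ?Y" if "y \<in> ?Y" for y
  proof
    fix z assume z: "z \<in> orbit f y"
    have "(f ^^ n) y \<in> X" for n using that assms(2) by (induction n) auto
    then have "z \<in> X" using z by (auto simp: orbit_altdef)
    moreover have "f z \<noteq> z"
    proof
      assume "f z = z"
      then have "orbit f y = {z}"
        using orbit_eq[of y z] that z by (metis (mono_tags) orbit_eq_singleton_iff mem_Collect_eq)
      then show False using self_in[of y] that orbit_eq_singleton_iff[of f y] by auto
    qed
    ultimately show "z \<in> ?Y" by simp
  qed
  then have "\<Union> (orbit f ` ?Y) = ?Y" using self_in by blast
  moreover have "p dvd card (\<Union> (orbit f ` ?Y))"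
  proof (rule dvd_partition)
    show "finite (\<Union> (orbit f ` ?Y))" using \<open>\<Union> (orbit f ` ?Y) = ?Y\<close> assms(1) by simp
    show "\<forall>c\<in>orbit f ` ?Y. p dvd card c" by (auto simp: card_orbit_prime[OF assms(4)] assms(3))
    show "\<forall>c1\<in>orbit f ` ?Y. \<forall>c2\<in>orbit f ` ?Y. c1 \<noteq> c2 \<longrightarrow> c1 \<inter> c2 = {}"
      using orbit_eq by blast
  qed
  moreover have "card X = card {x \<in> X. f x = x} + card ?Y"
    using assms(1) by (subst card_Un_disjoint[symmetric]) (auto intro: arg_cong[where f = card])
  ultimately show ?thesis by (auto elim!: dvdE)
qed

lemma bij_betw_funpow_id_on:
  assumes "bij_betw f A A" "finite A"
  shows "\<exists>n>0. is_id_on (f ^^ n) A"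
proof -
  define g where "g x = (if x \<in> A then f x else x)" for x
  have "g permutes A"
    using assms(1) by (intro bij_imp_permutes) (auto simp: g_def bij_betw_def inj_on_def image_def)
  then have "permutation g" using assms(2) permutation_permutes by blast
  then obtain n where n: "(g ^^ n) = id" "0 < n" by (rule permutation_is_nilpotent)
  have "(f ^^ m) a = (g ^^ m) a \<and> (f ^^ m) a \<in> A" if "a \<in> A" for a m
    using that assms(1) by (induction m) (auto simp: g_def bij_betw_def)
  then show ?thesis using n by (auto simp: is_id_on_def)
qed

lemma is_id_on_funpow_perm_order_on:
  assumes "bij_betw f A A" "finite A"
  shows "is_id_on (f ^^ perm_order_on f A) A"
  using LeastI_ex[OF bij_betw_funpow_id_on[OF assms]] unfolding perm_order_on_def by blast

lemma perm_order_on_prime: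
  assumes "prime p" "is_id_on (f ^^ p) A" "\<not> is_id_on f A"
  shows "perm_order_on f A = p"
  unfolding perm_order_on_def
proof (rule Least_equality)
  show "0 < p \<and> is_id_on (f ^^ p) A" using assms(1,2) prime_gt_0_nat by blast
  fix n assume n: "0 < n \<and> is_id_on (f ^^ n) A"
  show "p \<le> n"
  proof (rule ccontr)
    assume "\<not> p \<le> n"
    then have "\<not> p dvd n" using n by (meson dvd_imp_le)
    have "f a = a" if "a \<in> A" for a
      by (rule fixpoint_if_funpow_coprime[OF assms(1) _ _ \<open>\<not> p dvd n\<close>])
        (use assms(2) n that in \<open>auto simp: is_id_on_def\<close>)
    then show False using assms(3) by (simp add: is_id_on_def)
  qed
qed

lemma (in group) exists_elem_of_prime_order:
  assumes "finite (carrier G)" "prime p" "p dvd order G"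
  shows "\<exists>x\<in>carrier G. x \<noteq> \<one> \<and> x [^] p = \<one>"
proof -
  obtain S where S: "subgroup S G" "card S = p"
    using sylow_thm[of p G 1 "order G div p"] assms is_group by auto
  moreover have "card {\<one>} < p" using prime_ge_2_nat[OF assms(2)] by simp
  ultimately have "\<not> S \<subseteq> {\<one>}" using card_mono[of "{\<one>}" S] by auto
  then obtain x where x: "x \<in> S" "x \<noteq> \<one>" by blast
  interpret S: group "G\<lparr>carrier := S\<rparr>" by (rule subgroup.subgroup_is_group[OF S(1) is_group])
  have "x [^]\<^bsub>G\<lparr>carrier := S\<rparr>\<^esub> order (G\<lparr>carrier := S\<rparr>) = \<one>"
    using S.pow_order_eq_1 x(1) by simp
  then have "x [^] p = \<one>" using S(2) nat_pow_consistent by (simp add: order_def)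
  then show ?thesis using x subgroup.mem_carrier[OF S(1)] by blast
qed

section \<open>Injective homomorphisms\<close>

lemma image_eq_if_inj_on_both_ways:
  assumes "finite A" "finite B" "inj_on f A" "f ` A \<subseteq> B" "inj_on g B" "g ` B \<subseteq> A"
  shows "f ` A = B"
  using assms by (metis card_bij_eq card_image card_subset_eq)

definition mid :: "nat \<Rightarrow> 'a mstruct \<Rightarrow> nat \<Rightarrow> 'a \<Rightarrow> 'a" where
  "mid k H = (\<lambda>i\<in>{..<k}. \<lambda>a\<in>msort H i. a)"

definition mcomp :: "nat \<Rightarrow> 'a mstruct \<Rightarrow> (nat \<Rightarrow> 'b \<Rightarrow> 'c) \<Rightarrow> (nat \<Rightarrow> 'a \<Rightarrow> 'b) \<Rightarrow> nat \<Rightarrow> 'a \<Rightarrow> 'c" where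
  "mcomp k G \<psi> \<phi> = (\<lambda>i\<in>{..<k}. \<lambda>a\<in>msort G i. \<psi> i (\<phi> i a))"

text \<open>Injective homomorphisms are taken extensional outside the first k sorts of G, so that
  they form a finite set whose cardinality can be counted.\<close>

definition inj_homs :: "nat \<Rightarrow> nat list list \<Rightarrow> 'b mstruct \<Rightarrow> 'a mstruct \<Rightarrow> (nat \<Rightarrow> 'b \<Rightarrow> 'a) set" where
  "inj_homs k sig G H = {\<phi> \<in> (\<Pi>\<^sub>E i\<in>{..<k}. msort G i \<rightarrow>\<^sub>E msort H i).
      mhom k sig G H \<phi> \<and> (\<forall>i<k. inj_on (\<phi> i) (msort G i))}"

definition aut_group :: "nat \<Rightarrow> nat list list \<Rightarrow> 'a mstruct \<Rightarrow> (nat \<Rightarrow> 'a \<Rightarrow> 'a) monoid" where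
  "aut_group k sig H = \<lparr>carrier = inj_homs k sig H H, monoid.mult = mcomp k H, one = mid k H\<rparr>"

lemma aut_group_simps [simp]:
  "carrier (aut_group k sig H) = inj_homs k sig H H"
  "x \<otimes>\<^bsub>aut_group k sig H\<^esub> y = mcomp k H x y"
  "\<one>\<^bsub>aut_group k sig H\<^esub> = mid k H"
  by (simp_all add: aut_group_def)

lemma app_tuple_length [simp]: "length (app_tuple \<phi> ty xs) = length xs"
  by (simp add: app_tuple_def)

lemma app_tuple_nth [simp]: "t < length xs \<Longrightarrow> app_tuple \<phi> ty xs ! t = \<phi> (ty ! t) (xs ! t)"
  by (simp add: app_tuple_def)

lemma app_tuple_app_tuple:
  "app_tuple \<psi> ty (app_tuple \<phi> ty xs) = app_tuple (\<lambda>i a. \<psi> i (\<phi> i a)) ty xs"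
  by (rule nth_equalityI) auto

lemma mcomp_apply [simp]: "i < k \<Longrightarrow> a \<in> msort G i \<Longrightarrow> mcomp k G \<psi> \<phi> i a = \<psi> i (\<phi> i a)"
  by (simp add: mcomp_def)

lemma mid_apply [simp]: "i < k \<Longrightarrow> a \<in> msort G i \<Longrightarrow> mid k G i a = a"
  by (simp add: mid_def)

lemma inj_homs_mapsto: "\<phi> \<in> inj_homs k sig G H \<Longrightarrow> i < k \<Longrightarrow> a \<in> msort G i \<Longrightarrow> \<phi> i a \<in> msort H i"
  by (auto simp: inj_homs_def PiE_iff)

lemma inj_homsD:
  assumes "\<phi> \<in> inj_homs k sig G H"
  shows "mhom k sig G H \<phi>" "\<And>i. i < k \<Longrightarrow> inj_on (\<phi> i) (msort G i)"
  using assms by (simp_all add: inj_homs_def)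

lemma inj_homs_eqI:
  assumes "\<phi> \<in> inj_homs k sig G H" "\<psi> \<in> inj_homs k sig G H'"
    and "\<And>i a. i < k \<Longrightarrow> a \<in> msort G i \<Longrightarrow> \<phi> i a = \<psi> i a"
  shows "\<phi> = \<psi>"
proof (rule extensionalityI[of _ "{..<k}"])
  show "\<phi> \<in> extensional {..<k}" "\<psi> \<in> extensional {..<k}"
    using assms(1,2) by (auto simp: inj_homs_def PiE_def)
  fix i assume "i \<in> {..<k}"
  then have "\<phi> i \<in> extensional (msort G i)" "\<psi> i \<in> extensional (msort G i)"
    using assms(1,2) by (auto simp: inj_homs_def PiE_def Pi_def)
  then show "\<phi> i = \<psi> i" by (rule extensionalityI) (use assms(3) \<open>i \<in> {..<k}\<close> in simp)
qed

lemma finite_inj_homs: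
  assumes "mwf k sig G" "mwf k sig H"
  shows "finite (inj_homs k sig G H)"
proof -
  have "finite (\<Pi>\<^sub>E i\<in>{..<k}. msort G i \<rightarrow>\<^sub>E msort H i)"
    using assms unfolding mwf_def by (intro finite_PiE) auto
  then show ?thesis unfolding inj_homs_def by (rule rev_finite_subset) blast
qed

lemma msort_fix_sub [simp]: "i < k \<Longrightarrow> msort (fix_sub k sig H \<pi>) i = {a \<in> msort H i. \<pi> i a = a}"
  by (simp add: fix_sub_def Let_def)

lemma msort_fix_sub_subset: "msort (fix_sub k sig H \<pi>) i \<subseteq> msort H i"
  by (auto simp: fix_sub_def Let_def)

lemma mrel_fix_sub: "j < length sig \<Longrightarrow> mrel (fix_sub k sig H \<pi>) j =
    {xs \<in> mrel H j. \<forall>t<length xs. xs ! t \<in> msort (fix_sub k sig H \<pi>) (sig ! j ! t)}"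
  by (simp add: fix_sub_def Let_def)

lemma mrel_fix_sub_subset: "mrel (fix_sub k sig H \<pi>) j \<subseteq> mrel H j"
  by (auto simp: fix_sub_def Let_def)

lemma mwf_fix_sub:
  assumes "mwf k sig H"
  shows "mwf k sig (fix_sub k sig H \<pi>)"
  unfolding mwf_def
proof (intro conjI allI impI)
  fix i assume "i < k"
  then show "finite (msort (fix_sub k sig H \<pi>) i)"
    using assms msort_fix_sub_subset by (meson finite_subset mwf_def)
next
  fix i i' assume "i < k" "i' < k" "i \<noteq> i'"
  then show "msort (fix_sub k sig H \<pi>) i \<inter> msort (fix_sub k sig H \<pi>) i' = {}"
    using assms by (simp add: mwf_def disjoint_iff)
next
  fix j assume "j < length sig"
  then show "mrel (fix_sub k sig H \<pi>) j \<subseteq> tuples_of (fix_sub k sig H \<pi>) (sig ! j)"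
    using assms unfolding mwf_def tuples_of_def by (auto simp: mrel_fix_sub)
qed

lemma funpow_mauto_order:
  assumes "mwf k sig H" "mauto_order k sig p H \<pi>" "i < k" "a \<in> msort H i"
  shows "(\<pi> i ^^ p) a = a"
proof -
  have "bij_betw (\<pi> i) (msort H i) (msort H i)" "finite (msort H i)"
    using assms(1-3) unfolding mwf_def mauto_order_def mauto_def miso_via_def by auto
  moreover have "is_id_on (\<pi> i) (msort H i) \<or> perm_order_on (\<pi> i) (msort H i) = p"
    using assms(2,3) unfolding mauto_order_def by blast
  moreover have "(\<pi> i ^^ n) a = a" if "is_id_on (\<pi> i) (msort H i)" for n
    using that assms(4) by (induction n) (auto simp: is_id_on_def)
  ultimately show ?thesis using is_id_on_funpow_perm_order_on assms(4) by (metis is_id_on_def)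
qed

lemma aut_group_pow_apply:
  assumes "x \<in> inj_homs k sig H H" "i < k" "a \<in> msort H i"
  shows "(x [^]\<^bsub>aut_group k sig H\<^esub> (n::nat)) i a = (x i ^^ n) a"
  using assms(3)
proof (induction n arbitrary: a)
  case (Suc n)
  then show ?case
    using inj_homs_mapsto[OF assms(1,2)] assms(2) by (simp add: funpow_swap1)
qed (simp add: assms(2))

locale msig =
  fixes k :: nat and sig :: "nat list list"
  assumes sig_ok: "sig_ok k sig"
begin

lemma mrel_coord:
  assumes "mwf k sig G" "j < length sig" "xs \<in> mrel G j" "t < length xs"
  shows "sig ! j ! t < k" "xs ! t \<in> msort G (sig ! j ! t)"
proof -
  have "xs \<in> tuples_of G (sig ! j)" using assms(1-3) unfolding mwf_def by auto
  then have "xs ! t \<in> msort G (sig ! j ! t)" "t < length (sig ! j)"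
    using assms(4) unfolding tuples_of_def by auto
  then show "xs ! t \<in> msort G (sig ! j ! t)" by simp
  have "sig ! j \<in> set sig" "sig ! j ! t \<in> set (sig ! j)"
    using assms(2) \<open>t < length (sig ! j)\<close> by simp_all
  then show "sig ! j ! t < k" using sig_ok unfolding sig_ok_def by blast
qed

lemma finite_mrel:
  assumes "mwf k sig H" "j < length sig"
  shows "finite (mrel H j)"
proof -
  let ?U = "\<Union>i<k. msort H i"
  have "mrel H j \<subseteq> {xs. set xs \<subseteq> ?U \<and> length xs = length (sig ! j)}"
  proof
    fix xs assume xs: "xs \<in> mrel H j"
    then have "length xs = length (sig ! j)" using assms unfolding mwf_def tuples_of_def by blast
    moreover have "set xs \<subseteq> ?U"
      using mrel_coord[OF assms xs] by (force simp: in_set_conv_nth)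
    ultimately show "xs \<in> {xs. set xs \<subseteq> ?U \<and> length xs = length (sig ! j)}" by simp
  qed
  moreover have "finite ?U" using assms(1) by (simp add: mwf_def)
  ultimately show ?thesis using finite_lists_length_eq rev_finite_subset by blast
qed

lemma mhom_cong:
  assumes "mwf k sig G" "mhom k sig G H \<phi>"
    and "\<And>i a. i < k \<Longrightarrow> a \<in> msort G i \<Longrightarrow> \<phi> i a = \<psi> i a"
  shows "mhom k sig G H \<psi>"
  unfolding mhom_def
proof (intro conjI allI impI ballI)
  fix i a assume "i < k" "a \<in> msort G i"
  then show "\<psi> i a \<in> msort H i" using assms(2,3) by (metis mhom_def)
next
  fix j xs assume j: "j < length sig" "xs \<in> mrel G j"
  have "app_tuple \<phi> (sig ! j) xs = app_tuple \<psi> (sig ! j) xs"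
    by (rule nth_equalityI) (simp_all add: assms(3) mrel_coord[OF assms(1) j])
  then show "app_tuple \<psi> (sig ! j) xs \<in> mrel H j" using assms(2) j unfolding mhom_def by metis
qed

lemma mhom_mcomp:
  assumes "mwf k sig G" "mhom k sig G A \<phi>" "mhom k sig A B \<psi>"
  shows "mhom k sig G B (mcomp k G \<psi> \<phi>)"
proof (rule mhom_cong[OF assms(1)])
  show "mhom k sig G B (\<lambda>i a. \<psi> i (\<phi> i a))"
    using assms(2,3) unfolding mhom_def by (auto simp: app_tuple_app_tuple[symmetric])
qed simp

lemma inj_homs_mcomp:
  assumes "mwf k sig G" "\<phi> \<in> inj_homs k sig G A"
    and "mhom k sig A B \<psi>" "\<And>i. i < k \<Longrightarrow> inj_on (\<psi> i) (msort A i)"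
  shows "mcomp k G \<psi> \<phi> \<in> inj_homs k sig G B"
  unfolding inj_homs_def
proof (intro CollectI conjI allI impI)
  have maps: "\<phi> i a \<in> msort A i" if "i < k" "a \<in> msort G i" for i a
    using inj_homs_mapsto[OF assms(2) that] .
  then show "mcomp k G \<psi> \<phi> \<in> (\<Pi>\<^sub>E i\<in>{..<k}. msort G i \<rightarrow>\<^sub>E msort B i)"
    using assms(3) by (auto simp: mcomp_def mhom_def)
  show "mhom k sig G B (mcomp k G \<psi> \<phi>)"
    by (rule mhom_mcomp[OF assms(1) inj_homsD(1)[OF assms(2)] assms(3)])
  fix i assume "i < k"
  have "\<phi> i ` msort G i \<subseteq> msort A i" using maps \<open>i < k\<close> by blast
  then have "inj_on (\<psi> i) (\<phi> i ` msort G i)" by (rule inj_on_subset[OF assms(4)[OF \<open>i < k\<close>]])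
  with inj_homsD(2)[OF assms(2) \<open>i < k\<close>] have "inj_on (\<psi> i \<circ> \<phi> i) (msort G i)"
    by (rule comp_inj_on)
  then show "inj_on (mcomp k G \<psi> \<phi> i) (msort G i)"
    by (rule inj_on_cong[THEN iffD1, rotated]) (simp add: \<open>i < k\<close>)
qed

lemma mid_in_inj_homs:
  assumes "mwf k sig G"
  shows "mid k G \<in> inj_homs k sig G G"
proof -
  have "mhom k sig G G (\<lambda>i a. a)" unfolding mhom_def
  proof (intro conjI allI impI ballI)
    fix j xs assume "j < length sig" "xs \<in> mrel G j"
    moreover have "app_tuple (\<lambda>i a. a) (sig ! j) xs = xs" by (rule nth_equalityI) auto
    ultimately show "app_tuple (\<lambda>i a. a) (sig ! j) xs \<in> mrel G j" by simp
  qed simp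
  then have "mhom k sig G G (mid k G)" by (rule mhom_cong[OF assms]) simp
  then show ?thesis by (auto simp: inj_homs_def mid_def inj_on_def)
qed

section \<open>Counting injective homomorphisms modulo p\<close>

lemma card_inj_homs_miso_via:
  assumes G: "mwf k sig G" and iso: "miso_via k sig A B \<psi>"
  shows "card (inj_homs k sig G A) = card (inj_homs k sig G B)"
proof -
  define \<chi> where "\<chi> i = inv_into (msort A i) (\<psi> i)" for i
  have hom: "mhom k sig A B \<psi>" "mhom k sig B A \<chi>"
    and bij: "\<And>i. i < k \<Longrightarrow> bij_betw (\<psi> i) (msort A i) (msort B i)"
    using iso unfolding miso_via_def \<chi>_def by auto
  have inj: "\<And>i. i < k \<Longrightarrow> inj_on (\<psi> i) (msort A i)" "\<And>i. i < k \<Longrightarrow> inj_on (\<chi> i) (msort B i)"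
    using bij by (auto simp: \<chi>_def bij_betw_def inj_on_inv_into)
  have left: "\<chi> i (\<psi> i a) = a" if "i < k" "a \<in> msort A i" for i a
    unfolding \<chi>_def using bij_betw_inv_into_left[OF bij] that .
  have right: "\<psi> i (\<chi> i b) = b" if "i < k" "b \<in> msort B i" for i b
    unfolding \<chi>_def using bij_betw_inv_into_right[OF bij] that .
  have "bij_betw (mcomp k G \<psi>) (inj_homs k sig G A) (inj_homs k sig G B)"
  proof (rule bij_betw_byWitness[where f' = "mcomp k G \<chi>"])
    show "\<forall>\<phi>\<in>inj_homs k sig G A. mcomp k G \<chi> (mcomp k G \<psi> \<phi>) = \<phi>"
    proof
      fix \<phi> assume \<phi>: "\<phi> \<in> inj_homs k sig G A"
      have "mcomp k G \<chi> (mcomp k G \<psi> \<phi>) \<in> inj_homs k sig G A"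
        by (intro inj_homs_mcomp[OF G _ hom(2) inj(2)] inj_homs_mcomp[OF G \<phi> hom(1) inj(1)])
      then show "mcomp k G \<chi> (mcomp k G \<psi> \<phi>) = \<phi>"
        by (rule inj_homs_eqI[OF _ \<phi>]) (simp add: left inj_homs_mapsto[OF \<phi>])
    qed
    show "\<forall>\<phi>\<in>inj_homs k sig G B. mcomp k G \<psi> (mcomp k G \<chi> \<phi>) = \<phi>"
    proof
      fix \<phi> assume \<phi>: "\<phi> \<in> inj_homs k sig G B"
      have "mcomp k G \<psi> (mcomp k G \<chi> \<phi>) \<in> inj_homs k sig G B"
        by (intro inj_homs_mcomp[OF G _ hom(1) inj(1)] inj_homs_mcomp[OF G \<phi> hom(2) inj(2)])
      then show "mcomp k G \<psi> (mcomp k G \<chi> \<phi>) = \<phi>"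
        by (rule inj_homs_eqI[OF _ \<phi>]) (simp add: right inj_homs_mapsto[OF \<phi>])
    qed
    show "mcomp k G \<psi> ` inj_homs k sig G A \<subseteq> inj_homs k sig G B"
      using inj_homs_mcomp[OF G _ hom(1) inj(1)] by blast
    show "mcomp k G \<chi> ` inj_homs k sig G B \<subseteq> inj_homs k sig G A"
      using inj_homs_mcomp[OF G _ hom(2) inj(2)] by blast
  qed
  then show ?thesis by (rule bij_betw_same_card)
qed

lemma inj_homs_fix_sub:
  assumes G: "mwf k sig G" and hom: "mhom k sig H H \<pi>"
    and inj: "\<And>i. i < k \<Longrightarrow> inj_on (\<pi> i) (msort H i)"
  shows "inj_homs k sig G (fix_sub k sig H \<pi>) = {\<phi> \<in> inj_homs k sig G H. mcomp k G \<pi> \<phi> = \<phi>}"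
proof (intro equalityI subsetI)
  fix \<phi> assume \<phi>: "\<phi> \<in> inj_homs k sig G (fix_sub k sig H \<pi>)"
  have "\<phi> \<in> inj_homs k sig G H"
    using \<phi> msort_fix_sub_subset mrel_fix_sub_subset
    unfolding inj_homs_def mhom_def by (auto simp: PiE_iff) blast+
  moreover have "mcomp k G \<pi> \<phi> = \<phi>"
  proof (rule inj_homs_eqI[OF inj_homs_mcomp[OF G calculation hom inj] \<phi>])
    fix i a assume "i < k" "a \<in> msort G i"
    moreover from this have "\<phi> i a \<in> msort (fix_sub k sig H \<pi>) i" by (rule inj_homs_mapsto[OF \<phi>])
    ultimately show "mcomp k G \<pi> \<phi> i a = \<phi> i a" by simp
  qed
  ultimately show "\<phi> \<in> {\<phi> \<in> inj_homs k sig G H. mcomp k G \<pi> \<phi> = \<phi>}" by simp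
next
  fix \<phi> assume "\<phi> \<in> {\<phi> \<in> inj_homs k sig G H. mcomp k G \<pi> \<phi> = \<phi>}"
  then have \<phi>: "\<phi> \<in> inj_homs k sig G H" and "mcomp k G \<pi> \<phi> = \<phi>" by auto
  then have "\<pi> i (\<phi> i a) = \<phi> i a" if "i < k" "a \<in> msort G i" for i a
    using that by (metis mcomp_apply)
  then have maps: "\<phi> i a \<in> msort (fix_sub k sig H \<pi>) i" if "i < k" "a \<in> msort G i" for i a
    using that inj_homs_mapsto[OF \<phi> that] by simp
  have "mhom k sig G (fix_sub k sig H \<pi>) \<phi>"
    unfolding mhom_def
  proof (intro conjI allI impI ballI)
    fix j xs assume j: "j < length sig" "xs \<in> mrel G j"
    have "app_tuple \<phi> (sig ! j) xs \<in> mrel H j" using \<phi> j unfolding inj_homs_def mhom_def by blast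
    then show "app_tuple \<phi> (sig ! j) xs \<in> mrel (fix_sub k sig H \<pi>) j"
      using j maps mrel_coord[OF G j] by (simp add: mrel_fix_sub)
  qed (use maps in blast)
  then show "\<phi> \<in> inj_homs k sig G (fix_sub k sig H \<pi>)"
    using \<phi> maps by (auto simp: inj_homs_def PiE_iff)
qed

lemma card_inj_homs_fix_sub_mod:
  assumes G: "mwf k sig G" and H: "mwf k sig H" and p: "prime p" and \<pi>: "mauto_order k sig p H \<pi>"
  shows "card (inj_homs k sig G (fix_sub k sig H \<pi>)) mod p = card (inj_homs k sig G H) mod p"
proof -
  let ?X = "inj_homs k sig G H" and ?F = "mcomp k G \<pi>"
  have hom: "mhom k sig H H \<pi>" and inj: "\<And>i. i < k \<Longrightarrow> inj_on (\<pi> i) (msort H i)"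
    using \<pi> unfolding mauto_order_def mauto_def miso_via_def bij_betw_def by auto
  have closed: "?F ` ?X \<subseteq> ?X" using inj_homs_mcomp[OF G _ hom inj] by blast
  have iter: "(?F ^^ n) \<phi> \<in> ?X \<and> (\<forall>i<k. \<forall>a\<in>msort G i. (?F ^^ n) \<phi> i a = (\<pi> i ^^ n) (\<phi> i a))"
    if "\<phi> \<in> ?X" for \<phi> n
    using that closed by (induction n) auto
  have "(?F ^^ p) \<phi> = \<phi>" if "\<phi> \<in> ?X" for \<phi>
    by (rule inj_homs_eqI[OF conjunct1[OF iter[OF that]] that])
      (simp add: iter[OF that] funpow_mauto_order[OF H \<pi>] inj_homs_mapsto[OF that])
  then show ?thesis
    using card_fixpoints_mod_prime[OF finite_inj_homs[OF G H] closed _ p]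
      inj_homs_fix_sub[OF G hom inj]
    by simp
qed

lemma card_inj_homs_pstep_mod:
  assumes G: "mwf k sig G" and H: "mwf k sig H" and p: "prime p" and step: "pstep k sig p H H'"
  shows "card (inj_homs k sig G H') mod p = card (inj_homs k sig G H) mod p"
proof -
  obtain \<pi> where \<pi>: "mauto_order k sig p H \<pi>" and "miso k sig H' (fix_sub k sig H \<pi>)"
    using step unfolding pstep_def by blast
  then obtain \<psi> where iso: "miso_via k sig H' (fix_sub k sig H \<pi>) \<psi>" unfolding miso_def by blast
  have "card (inj_homs k sig G H') = card (inj_homs k sig G (fix_sub k sig H \<pi>))"
    by (rule card_inj_homs_miso_via[OF G iso])
  then show ?thesis using card_inj_homs_fix_sub_mod[OF G H p \<pi>] by simp
qed

lemma card_inj_homs_preach_mod: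
  fixes H :: "'a mstruct"
  assumes G: "mwf k sig G" and p: "prime p" and reach: "preach k sig p H H'"
  shows "card (inj_homs k sig G H') mod p = card (inj_homs k sig G H) mod p"
proof -
  obtain hs :: "'a mstruct list" where hs: "hs \<noteq> []" "\<forall>G\<in>set hs. mwf k sig G"
    "miso k sig (hd hs) H" "miso k sig (last hs) H'"
    "\<forall>i. Suc i < length hs \<longrightarrow> pstep k sig p (hs ! i) (hs ! Suc i)"
    using reach unfolding preach_def by blast
  have chain: "card (inj_homs k sig G (hs ! i)) mod p = card (inj_homs k sig G (hs ! 0)) mod p"
    if "i < length hs" for i
    using that
  proof (induction i)
    case (Suc i)
    have "mwf k sig (hs ! i)" using hs(2) Suc.prems by simp
    moreover have "pstep k sig p (hs ! i) (hs ! Suc i)" using hs(5) Suc.prems by blast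
    ultimately have
      "card (inj_homs k sig G (hs ! Suc i)) mod p = card (inj_homs k sig G (hs ! i)) mod p"
      by (rule card_inj_homs_pstep_mod[OF G _ p])
    then show ?case using Suc by simp
  qed simp
  obtain \<psi> \<psi>' where "miso_via k sig (hd hs) H \<psi>" "miso_via k sig (last hs) H' \<psi>'"
    using hs(3,4) unfolding miso_def by blast
  then have "card (inj_homs k sig G (hs ! 0)) = card (inj_homs k sig G H)"
    "card (inj_homs k sig G (hs ! (length hs - 1))) = card (inj_homs k sig G H')"
    using hs(1) card_inj_homs_miso_via[OF G] by (simp_all add: hd_conv_nth last_conv_nth)
  then show ?thesis using chain[of "length hs - 1"] hs(1) by simp
qed

section \<open>The p-rigid reduct\<close>

lemma inj_on_app_tuple:
  assumes G: "mwf k sig G" and \<phi>: "\<phi> \<in> inj_homs k sig G H" and j: "j < length sig"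
  shows "inj_on (app_tuple \<phi> (sig ! j)) (mrel G j)"
proof (rule inj_onI)
  fix xs ys assume xs: "xs \<in> mrel G j" and ys: "ys \<in> mrel G j"
    and eq: "app_tuple \<phi> (sig ! j) xs = app_tuple \<phi> (sig ! j) ys"
  then have len: "length xs = length ys" by (metis app_tuple_length)
  show "xs = ys"
  proof (rule nth_equalityI[OF len])
    fix t assume t: "t < length xs"
    then have "\<phi> (sig ! j ! t) (xs ! t) = \<phi> (sig ! j ! t) (ys ! t)"
      using arg_cong[OF eq, of "\<lambda>zs. zs ! t"] len by simp
    moreover have "inj_on (\<phi> (sig ! j ! t)) (msort G (sig ! j ! t))"
      using inj_homsD(2)[OF \<phi> mrel_coord(1)[OF G j xs t]] .
    ultimately show "xs ! t = ys ! t"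
      using mrel_coord(2)[OF G j xs t] mrel_coord(2)[OF G j ys] t len by (simp add: inj_on_eq_iff)
  qed
qed

lemma miso_via_if_inj_homs:
  assumes G: "mwf k sig G" and H: "mwf k sig H"
    and f: "f \<in> inj_homs k sig G H" and g: "g \<in> inj_homs k sig H G"
  shows "miso_via k sig G H f"
proof -
  have bij: "bij_betw (f i) (msort G i) (msort H i)" if "i < k" for i
  proof -
    have "f i ` msort G i = msort H i"
      using G H that inj_homs_mapsto[OF f that] inj_homs_mapsto[OF g that]
        inj_homsD(2)[OF f that] inj_homsD(2)[OF g that]
      by (intro image_eq_if_inj_on_both_ways[where g = "g i"]) (auto simp: mwf_def)
    then show ?thesis using inj_homsD(2)[OF f that] by (simp add: bij_betw_def)
  qed
  have onto: "app_tuple f (sig ! j) ` mrel G j = mrel H j" if "j < length sig" for j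
    using inj_homsD(1)[OF f] inj_homsD(1)[OF g] that
    by (intro image_eq_if_inj_on_both_ways[OF finite_mrel[OF G that] finite_mrel[OF H that]
          inj_on_app_tuple[OF G f that] _ inj_on_app_tuple[OF H g that]]) (auto simp: mhom_def)
  have "mhom k sig H G (\<lambda>i. inv_into (msort G i) (f i))"
    unfolding mhom_def
  proof (intro conjI allI impI ballI)
    fix i b assume "i < k" "b \<in> msort H i"
    then show "inv_into (msort G i) (f i) b \<in> msort G i"
      using bij by (metis bij_betw_def inv_into_into)
  next
    fix j ys assume j: "j < length sig" and "ys \<in> mrel H j"
    then obtain xs where xs: "xs \<in> mrel G j" "ys = app_tuple f (sig ! j) xs" using onto by blast
    have "app_tuple (\<lambda>i. inv_into (msort G i) (f i)) (sig ! j) ys = xs"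
      unfolding xs(2) app_tuple_app_tuple
      by (rule nth_equalityI)
        (simp_all add: mrel_coord[OF G j xs(1)] bij_betw_inv_into_left[OF bij])
    then show "app_tuple (\<lambda>i. inv_into (msort G i) (f i)) (sig ! j) ys \<in> mrel G j" using xs by simp
  qed
  then show ?thesis unfolding miso_via_def using inj_homsD(1)[OF f] bij by blast
qed

lemma miso_refl:
  assumes "mwf k sig G"
  shows "miso k sig G G"
  using miso_via_if_inj_homs[OF assms assms mid_in_inj_homs[OF assms] mid_in_inj_homs[OF assms]]
  unfolding miso_def by blast

lemma group_aut_group:
  assumes H: "mwf k sig H"
  shows "group (aut_group k sig H)"
proof (rule groupI, unfold aut_group_simps)
  show "mid k H \<in> inj_homs k sig H H" by (rule mid_in_inj_homs[OF H])
  show "mcomp k H x y \<in> inj_homs k sig H H"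
    if "x \<in> inj_homs k sig H H" "y \<in> inj_homs k sig H H" for x y
    by (rule inj_homs_mcomp[OF H that(2) inj_homsD[OF that(1)]])
  show "mcomp k H (mcomp k H x y) z = mcomp k H x (mcomp k H y z)"
    if "x \<in> inj_homs k sig H H" "y \<in> inj_homs k sig H H" "z \<in> inj_homs k sig H H" for x y z
    using that by (auto simp: mcomp_def fun_eq_iff inj_homs_mapsto)
  show "mcomp k H (mid k H) x = x" if x: "x \<in> inj_homs k sig H H" for x
  proof (rule inj_homs_eqI[OF inj_homs_mcomp[OF H x inj_homsD[OF mid_in_inj_homs[OF H]]] x])
    fix i a assume "i < k" "a \<in> msort H i"
    with inj_homs_mapsto[OF x this] show "mcomp k H (mid k H) x i a = x i a" by simp
  qed
  fix x assume x: "x \<in> inj_homs k sig H H"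
  define \<chi> where "\<chi> i = inv_into (msort H i) (x i)" for i
  have iso: "miso_via k sig H H x" by (rule miso_via_if_inj_homs[OF H H x x])
  then have bij: "\<And>i. i < k \<Longrightarrow> bij_betw (x i) (msort H i) (msort H i)"
    and "mhom k sig H H \<chi>" unfolding miso_via_def \<chi>_def by auto
  moreover have "\<And>i. i < k \<Longrightarrow> inj_on (\<chi> i) (msort H i)"
    using bij by (auto simp: \<chi>_def bij_betw_def inj_on_inv_into)
  ultimately have y: "mcomp k H \<chi> (mid k H) \<in> inj_homs k sig H H"
    by (intro inj_homs_mcomp[OF H mid_in_inj_homs[OF H]])
  have "mcomp k H (mcomp k H \<chi> (mid k H)) x = mid k H"
  proof (rule inj_homs_eqI[OF inj_homs_mcomp[OF H x inj_homsD[OF y]] mid_in_inj_homs[OF H]])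
    fix i a assume "i < k" "a \<in> msort H i"
    with inj_homs_mapsto[OF x this] show "mcomp k H (mcomp k H \<chi> (mid k H)) x i a = mid k H i a"
      by (simp add: \<chi>_def bij_betw_inv_into_left[OF bij])
  qed
  then show "\<exists>y\<in>inj_homs k sig H H. mcomp k H y x = mid k H" using y by blast
qed

lemma mauto_order_if_funpow_prime:
  assumes H: "mwf k sig H" and p: "prime p" and x: "x \<in> inj_homs k sig H H" "x \<noteq> mid k H"
    and period: "\<And>i a. i < k \<Longrightarrow> a \<in> msort H i \<Longrightarrow> (x i ^^ p) a = a"
  shows "mauto_order k sig p H x"
  unfolding mauto_order_def
proof (intro conjI allI impI)
  show "mauto k sig H x" unfolding mauto_def by (rule miso_via_if_inj_homs[OF H H x(1) x(1)])
  fix i assume "i < k"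
  then show "is_id_on (x i) (msort H i) \<or> perm_order_on (x i) (msort H i) = p"
    using perm_order_on_prime[OF p, of "x i" "msort H i"] period by (auto simp: is_id_on_def)
next
  show "\<exists>i<k. \<not> is_id_on (x i) (msort H i)"
  proof (rule ccontr)
    assume "\<not> ?thesis"
    then have "x = mid k H"
      by (intro inj_homs_eqI[OF x(1) mid_in_inj_homs[OF H]]) (simp add: is_id_on_def)
    then show False using x(2) by contradiction
  qed
qed

lemma not_dvd_card_inj_homs_if_p_rigid:
  assumes H: "mwf k sig H" and p: "prime p" and rigid: "p_rigid k sig p H"
  shows "\<not> p dvd card (inj_homs k sig H H)"
proof
  assume "p dvd card (inj_homs k sig H H)"
  then obtain x where x: "x \<in> inj_homs k sig H H" "x \<noteq> mid k H"
    and pow: "x [^]\<^bsub>aut_group k sig H\<^esub> p = mid k H"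
    using group.exists_elem_of_prime_order[OF group_aut_group[OF H] _ p] finite_inj_homs[OF H H]
    by (auto simp: order_def)
  have "(x i ^^ p) a = a" if "i < k" "a \<in> msort H i" for i a
    using aut_group_pow_apply[OF x(1) that, of p] that by (simp add: pow)
  then have "mauto_order k sig p H x" by (rule mauto_order_if_funpow_prime[OF H p x])
  then show False using rigid unfolding p_rigid_def by blast
qed

lemma inj_homs_nonempty_if_p_rigid_preach:
  assumes H1: "mwf k sig H1" "p_rigid k sig p H1" "preach k sig p H H1"
    and H2: "preach k sig p H H2" and p: "prime p"
  shows "inj_homs k sig H1 H2 \<noteq> {}"
proof -
  have "card (inj_homs k sig H1 H2) mod p = card (inj_homs k sig H1 H1) mod p"
    using card_inj_homs_preach_mod[OF H1(1) p H1(3)] card_inj_homs_preach_mod[OF H1(1) p H2] by simp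
  moreover have "card (inj_homs k sig H1 H1) mod p \<noteq> 0"
    using not_dvd_card_inj_homs_if_p_rigid[OF H1(1) p H1(2)] by (simp add: dvd_eq_mod_eq_0)
  ultimately show ?thesis by auto
qed

lemma miso_if_p_rigid_preach:
  assumes H1: "mwf k sig H1" "p_rigid k sig p H1" "preach k sig p H H1"
    and H2: "mwf k sig H2" "p_rigid k sig p H2" "preach k sig p H H2" and p: "prime p"
  shows "miso k sig H1 H2"
proof -
  obtain f g where "f \<in> inj_homs k sig H1 H2" "g \<in> inj_homs k sig H2 H1"
    using inj_homs_nonempty_if_p_rigid_preach[OF H1 H2(3) p]
      inj_homs_nonempty_if_p_rigid_preach[OF H2 H1(3) p] by blast
  then show ?thesis unfolding miso_def using miso_via_if_inj_homs[OF H1(1) H2(1)] by blast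
qed

lemma preach_refl:
  assumes "mwf k sig H"
  shows "preach k sig p H H"
  unfolding preach_def using assms miso_refl[OF assms] by (intro exI[of _ "[H]"]) simp

lemma preach_fix_sub:
  fixes H :: "'a mstruct"
  assumes H: "mwf k sig H" and \<pi>: "mauto_order k sig p H \<pi>"
    and reach: "preach k sig p (fix_sub k sig H \<pi>) H'"
  shows "preach k sig p H H'"
proof -
  obtain hs :: "'a mstruct list" where hs: "hs \<noteq> []" "\<forall>G\<in>set hs. mwf k sig G"
    "miso k sig (hd hs) (fix_sub k sig H \<pi>)" "miso k sig (last hs) H'"
    "\<forall>i. Suc i < length hs \<longrightarrow> pstep k sig p (hs ! i) (hs ! Suc i)"
    using reach unfolding preach_def by blast
  have "pstep k sig p H (hs ! 0)" unfolding pstep_def using \<pi> hs(1,3) by (auto simp: hd_conv_nth)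
  then have "\<forall>i. Suc i < length (H # hs) \<longrightarrow> pstep k sig p ((H # hs) ! i) ((H # hs) ! Suc i)"
    using hs(5) by (auto simp: nth_Cons split: nat.split)
  then show ?thesis
    unfolding preach_def using hs H miso_refl[OF H] by (intro exI[of _ "H # hs"]) simp
qed

lemma exists_p_rigid_preach:
  fixes H :: "'a mstruct"
  assumes "mwf k sig H"
  shows "\<exists>H' :: 'a mstruct. mwf k sig H' \<and> p_rigid k sig p H' \<and> preach k sig p H H'"
  using assms
proof (induction "\<Sum>i<k. card (msort H i)" arbitrary: H rule: less_induct)
  case less
  show ?case
  proof (cases "p_rigid k sig p H")
    case True
    then show ?thesis using less.prems preach_refl by blast
  next
    case False
    then obtain \<pi> where \<pi>: "mauto_order k sig p H \<pi>" unfolding p_rigid_def by blast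
    then obtain i a where i: "i < k" "a \<in> msort H i" "\<pi> i a \<noteq> a"
      unfolding mauto_order_def is_id_on_def by blast
    have "(\<Sum>i<k. card (msort (fix_sub k sig H \<pi>) i)) < (\<Sum>i<k. card (msort H i))"
    proof (rule sum_strict_mono_ex1)
      show "\<forall>i\<in>{..<k}. card (msort (fix_sub k sig H \<pi>) i) \<le> card (msort H i)"
        using less.prems msort_fix_sub_subset by (auto intro: card_mono simp: mwf_def)
      have "msort (fix_sub k sig H \<pi>) i \<subset> msort H i" using i by auto
      then show "\<exists>i\<in>{..<k}. card (msort (fix_sub k sig H \<pi>) i) < card (msort H i)"
        using less.prems i(1) by (metis lessThan_iff mwf_def psubset_card_mono)
    qed simp
    then obtain H' :: "'a mstruct" where "mwf k sig H'" "p_rigid k sig p H'"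
      "preach k sig p (fix_sub k sig H \<pi>) H'"
      using less.hyps mwf_fix_sub[OF less.prems] by blast
    then show ?thesis using preach_fix_sub[OF less.prems \<pi>] by blast
  qed
qed

end

theorem proposition2p1:
  fixes k :: nat and sig :: "nat list list" and p :: nat and H :: "'a mstruct"
  assumes "sig_ok k sig" and "prime p" and "mwf k sig H"
  shows "(\<exists>Hs :: 'a mstruct. mwf k sig Hs \<and> p_rigid k sig p Hs \<and> preach k sig p H Hs) \<and>
         (\<forall>(H1 :: 'b mstruct) (H2 :: 'c mstruct).
            mwf k sig H1 \<and> p_rigid k sig p H1 \<and> preach k sig p H H1 \<and>
            mwf k sig H2 \<and> p_rigid k sig p H2 \<and> preach k sig p H H2 \<longrightarrow> miso k sig H1 H2)"
proof -
  interpret msig k sig by (rule msig.intro) (rule assms(1))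
  show ?thesis
    using exists_p_rigid_preach[OF assms(3)] miso_if_p_rigid_preach[OF _ _ _ _ _ _ assms(2)]
    by blast
qed

end
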